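(* Let $\varphi>0$, $v_1,\dots,v_n>0$, let $\mathcal J\subseteq\{1,\dots,n\}^2$ be any set of ordered pairs ($(j,k)\in\mathcal J\Rightarrow j\le k$), $1-\alpha\in(0,1)$, $\delta=\alpha/(2|\mathcal J|)$, $v_{j:k}=\sum_{i=j}^kv_i$ and $Z_{j:k}=\frac1{v_{j:k}}\sum_{i=j}^kv_iY_i$. In the following two cases, the bounds $L^\alpha_{\mathbf Y,i}=\sup_{(j,k)\in\mathcal J:\mu_i\ge\mu_k}l^\delta(Z_{j:k},v_{j:k},\varphi,\kappa)$, $U^\alpha_{\mathbf Y,i}=\inf_{(j,k)\in\mathcal J:\mu_i\le\mu_j}u^\delta(Z_{j:k},v_{j:k},\varphi,\kappa)$ (which satisfy $\mathbb P(L^\alpha_{\mathbf Y,i}\le\mu_i\le U^\alpha_{\mathbf Y,i}\ \forall i)\ge1-\alpha$) are given explicitly by: (i) Gamma case ($Y_1,\dots,Y_n$ independent, $Y_i$ gamma with shape $v_i/\varphi$ and rate $v_i/(\varphi\mu_i)$, $\mu_i>0$, $\mu_1\le\dots\le\mu_n$): $L^\alpha_{\mathbf Y,i}=\sup_{(j,k)\in\mathcal J:\mu_i\ge\mu_k}\frac{v_{j:k}/\varphi}{q_\Gamma(1-\delta;v_{j:k}/\varphi,Z_{j:k})}\mathbf 1_{\{Z_{j:k}>0\}}$ and $U^\alpha_{\mathbf Y,i}=\inf_{(j,k)\in\mathcal J:\mu_i\le\mu_j}\frac{v_{j:k}/\varphi}{q_\Gamma(\delta;v_{j:k}/\varphi,Z_{j:k})}\mathbf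 1_{\{Z_{j:k}>0\}}$, where $q_\Gamma(\delta;\gamma,c)$ is the $\delta$-quantile of the gamma distribution with shape $\gamma$ and rate $c$. (ii) Normal case ($Y_1,\dots,Y_n$ independent, $Y_i\sim\mathcal N(\mu_i,\varphi/v_i)$, $\mu_1\le\dots\le\mu_n$): $L^\alpha_{\mathbf Y,i}=\sup_{(j,k)\in\mathcal J:\mu_i\ge\mu_k}Z_{j:k}-\frac{\Phi^{-1}(1-\delta)}{\sqrt{v_{j:k}/\varphi}}$ and $U^\alpha_{\mathbf Y,i}=\inf_{(j,k)\in\mathcal J:\mu_i\le\mu_j}Z_{j:k}-\frac{\Phi^{-1}(\delta)}{\sqrt{v_{j:k}/\varphi}}$, with $\Phi^{-1}(\delta)$ the $\delta$-quantile of the standard normal distribution.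
   Context: In both cases $Y_i\sim\mathrm{EDF}(\theta_i,v_i,\varphi,\kappa)$, an exponential dispersion family in reproductive form (density $\exp\{(y\theta-\kappa(\theta))/(\varphi/v)+a(y;v/\varphi)\}$) with mean $\mu_i=\kappa'(\theta_i)$ and canonical link $h=(\kappa')^{-1}$. For $W$ in this family with mean $\mu$ and volume $v$: $F(y;h(\mu),v,\varphi,\kappa)=\mathbb P(W\le y)$, $F^*(y;h(\mu),v,\varphi,\kappa)=\mathbb P(W<y)$; $l^{\delta}(y,v,\varphi,\kappa)=\inf\{\mu:F^*(y;h(\mu),v,\varphi,\kappa)\le1-\delta\}$, $u^{\delta}(y,v,\varphi,\kappa)=\sup\{\mu:F(y;h(\mu),v,\varphi,\kappa)\ge\delta\}$, over the mean parameter space ($(0,\infty)$ for gamma, $\mathbb R$ for normal), with $\inf\emptyset$ the supremum and $\sup\emptyset$ the infimum of the mean parameter space. *)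

theory Defs
  imports "HOL-Probability.Probability"
begin

definition gamma_density :: "real \<Rightarrow> real \<Rightarrow> real \<Rightarrow> real" where
  "gamma_density a b x =
     (if x > 0 then b powr a * x powr (a - 1) * exp (- b * x) / Gamma a else 0)"

definition gamma_distr :: "real \<Rightarrow> real \<Rightarrow> real measure" where
  "gamma_distr a b = density lborel (\<lambda>x. ennreal (gamma_density a b x))"

definition normal_distr :: "real \<Rightarrow> real \<Rightarrow> real measure" where
  "normal_distr m s = density lborel (\<lambda>x. ennreal (normal_density m s x))"

definition quantile :: "real measure \<Rightarrow> real \<Rightarrow> real" where
  "quantile M p = Inf {x. measure M {..x} \<ge> p}"

definition q_gamma :: "real \<Rightarrow> real \<Rightarrow> real \<Rightarrow> real" where
  "q_gamma p shape rate = quantile (gamma_distr shape rate) p"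

definition Phi_inv :: "real \<Rightarrow> real" where
  "Phi_inv p = quantile (normal_distr 0 1) p"

definition edf_gamma :: "real \<Rightarrow> real \<Rightarrow> real \<Rightarrow> real measure" where
  "edf_gamma mu v phi = gamma_distr (v / phi) (v / (phi * mu))"

definition edf_normal :: "real \<Rightarrow> real \<Rightarrow> real \<Rightarrow> real measure" where
  "edf_normal mu v phi = normal_distr mu (sqrt (phi / v))"

definition cdf_le :: "real measure \<Rightarrow> real \<Rightarrow> real" where
  "cdf_le M y = measure M {..y}"

definition cdf_lt :: "real measure \<Rightarrow> real \<Rightarrow> real" where
  "cdf_lt M y = measure M {..<y}"

text \<open>Generic: Ms = mean parameter space, D mu = law of W with mean mu.
  inf of the empty set is the supremum of Ms, sup of the empty set is the
  infimum of Ms (computed in the extended reals).\<close>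
definition l_bound :: "real set \<Rightarrow> (real \<Rightarrow> real measure) \<Rightarrow> real \<Rightarrow> real \<Rightarrow> ereal" where
  "l_bound Ms D y \<delta> =
     (let S = {mu \<in> Ms. cdf_lt (D mu) y \<le> 1 - \<delta>}
      in if S = {} then Sup (ereal ` Ms) else Inf (ereal ` S))"

definition u_bound :: "real set \<Rightarrow> (real \<Rightarrow> real measure) \<Rightarrow> real \<Rightarrow> real \<Rightarrow> ereal" where
  "u_bound Ms D y \<delta> =
     (let S = {mu \<in> Ms. cdf_le (D mu) y \<ge> \<delta>}
      in if S = {} then Inf (ereal ` Ms) else Sup (ereal ` S))"

definition l_gamma :: "real \<Rightarrow> real \<Rightarrow> real \<Rightarrow> real \<Rightarrow> ereal" where
  "l_gamma \<delta> y v phi = l_bound {0<..} (\<lambda>mu. edf_gamma mu v phi) y \<delta>"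

definition u_gamma :: "real \<Rightarrow> real \<Rightarrow> real \<Rightarrow> real \<Rightarrow> ereal" where
  "u_gamma \<delta> y v phi = u_bound {0<..} (\<lambda>mu. edf_gamma mu v phi) y \<delta>"

definition l_normal :: "real \<Rightarrow> real \<Rightarrow> real \<Rightarrow> real \<Rightarrow> ereal" where
  "l_normal \<delta> y v phi = l_bound UNIV (\<lambda>mu. edf_normal mu v phi) y \<delta>"

definition u_normal :: "real \<Rightarrow> real \<Rightarrow> real \<Rightarrow> real \<Rightarrow> ereal" where
  "u_normal \<delta> y v phi = u_bound UNIV (\<lambda>mu. edf_normal mu v phi) y \<delta>"

definition vsum :: "(nat \<Rightarrow> real) \<Rightarrow> nat \<Rightarrow> nat \<Rightarrow> real" where
  "vsum v j k = (\<Sum>i=j..k. v i)"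

definition Zavg :: "(nat \<Rightarrow> real) \<Rightarrow> (nat \<Rightarrow> real) \<Rightarrow> nat \<Rightarrow> nat \<Rightarrow> real" where
  "Zavg v y j k = (\<Sum>i=j..k. v i * y i) / vsum v j k"

definition L_bound ::
  "(real \<Rightarrow> real \<Rightarrow> real \<Rightarrow> real \<Rightarrow> ereal) \<Rightarrow> real \<Rightarrow> (nat \<times> nat) set \<Rightarrow> real
   \<Rightarrow> (nat \<Rightarrow> real) \<Rightarrow> (nat \<Rightarrow> real) \<Rightarrow> (nat \<Rightarrow> real) \<Rightarrow> nat \<Rightarrow> ereal" where
  "L_bound l \<delta> J phi v y mu i =
     (SUP (j,k)\<in>{(j,k)\<in>J. mu i \<ge> mu k}. l \<delta> (Zavg v y j k) (vsum v j k) phi)"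

definition U_bound ::
  "(real \<Rightarrow> real \<Rightarrow> real \<Rightarrow> real \<Rightarrow> ereal) \<Rightarrow> real \<Rightarrow> (nat \<times> nat) set \<Rightarrow> real
   \<Rightarrow> (nat \<Rightarrow> real) \<Rightarrow> (nat \<Rightarrow> real) \<Rightarrow> (nat \<Rightarrow> real) \<Rightarrow> nat \<Rightarrow> ereal" where
  "U_bound u \<delta> J phi v y mu i =
     (INF (j,k)\<in>{(j,k)\<in>J. mu i \<le> mu j}. u \<delta> (Zavg v y j k) (vsum v j k) phi)"

end

theory Submission
  imports Defs
begin

text \<open>
  Both families are continuous with a cdf that increases strictly on its support, so
  \<open>F(y) \<le> p\<close> and \<open>p \<le> F(y)\<close> can be solved exactly by the \<open>p\<close>-quantile, and \<open>F = F*\<close>.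
  For the normal family, \<open>F(y; \<mu>) = \<Phi>((y - \<mu>) / \<sigma>)\<close> with \<open>\<sigma> = sqrt(\<phi>/v)\<close>, so the sets
  defining \<open>l\<^sup>\<delta>\<close> and \<open>u\<^sup>\<delta>\<close> are half-lines in \<open>\<mu>\<close> with endpoint \<open>y - \<sigma> \<Phi>\<^sup>-\<^sup>1(\<cdot>)\<close>.
  For the gamma family with shape \<open>a = v/\<phi>\<close> and rate \<open>a/\<mu>\<close>, rate and argument enter the cdf
  only through their product, so \<open>F(y; \<mu>)\<close> is the cdf of the gamma law with rate \<open>y\<close> evaluated
  at \<open>a/\<mu>\<close>; the sets are again half-lines in \<open>\<mu>\<close>, with endpoint \<open>a / q\<^sub>\<Gamma>(\<cdot>; a, y)\<close>.
  If \<open>y \<le> 0\<close> the gamma cdf vanishes at \<open>y\<close>, and both bounds collapse to the lower end \<open>0\<close>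
  of the mean space.
\<close>

text \<open>Strict increase where positive means the support is an interval unbounded above;
  it is what makes \<open>cdf M t \<le> p\<close> equivalent to \<open>t \<le> quantile M p\<close>.\<close>

locale continuous_real_distribution = real_distribution +
  assumes measure_singleton: "measure M {x} = 0"
    and cdf_strict_mono: "s < t \<Longrightarrow> 0 < cdf M t \<Longrightarrow> cdf M s < cdf M t"

lemma cdf_le_eq_cdf: "cdf_le M x = cdf M x"
  by (simp add: cdf_le_def cdf_def)

context real_distribution
begin

lemma quantile_le_iff:
  assumes p: "0 < p" "p < 1"
  shows "quantile M p \<le> t \<longleftrightarrow> p \<le> cdf M t"
proof -
  define S where "S = {x. p \<le> cdf M x}"
  have quantile_S: "quantile M p = Inf S"
    by (simp add: quantile_def S_def cdf_def)
  obtain N where "\<forall>x\<ge>N. p < cdf M x"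
    using order_tendstoD(1)[OF cdf_lim_at_top_prob p(2)] by (auto simp: eventually_at_top_linorder)
  then have "N \<in> S"
    by (simp add: S_def less_imp_le)
  obtain B where B: "\<forall>x\<le>B. cdf M x < p"
    using order_tendstoD(2)[OF cdf_lim_at_bot p(1)] by (auto simp: eventually_at_bot_linorder)
  have bdd: "bdd_below S"
  proof (rule bdd_belowI)
    fix x assume "x \<in> S"
    then show "B \<le> x"
      using B by (cases "x \<le> B") (auto simp: S_def)
  qed
  have "p \<le> cdf M (Inf S)"
  proof (rule tendsto_lowerbound[OF cdf_is_right_cont[unfolded continuous_within]])
    show "\<forall>\<^sub>F x in at_right (Inf S). p \<le> cdf M x"
      unfolding eventually_at_right_field
    proof (intro exI[of _ "Inf S + 1"] conjI allI impI)
      fix x assume "Inf S < x"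
      then obtain s where "s \<in> S" "s < x"
        using cInf_lessD[of S x] \<open>N \<in> S\<close> by blast
      then show "p \<le> cdf M x"
        using cdf_nondecreasing[of s x] by (simp add: S_def)
    qed simp
  qed simp
  then show ?thesis
    unfolding quantile_S
    using cInf_lower[OF _ bdd, of t] cdf_nondecreasing[of "Inf S" t] by (auto simp: S_def)
qed

end

context continuous_real_distribution
begin

lemma cdf_lt_eq_cdf: "cdf_lt M x = cdf M x"
  using measure_singleton[of x] unfolding cdf_lt_def cdf_def ivl_disj_un(2)[symmetric]
  by (subst finite_measure_Union) auto

lemma cdf_quantile:
  assumes p: "0 < p" "p < 1"
  shows "cdf M (quantile M p) = p"
proof (rule antisym)
  have below: "cdf M y < p" if "y < quantile M p" for y
    using quantile_le_iff[OF p, of y] that by auto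
  have "(cdf M \<longlongrightarrow> cdf M (quantile M p)) (at_left (quantile M p))"
    using isCont_cdf measure_singleton by (simp add: isCont_def filterlim_at_split)
  then show "cdf M (quantile M p) \<le> p"
    by (rule tendsto_upperbound)
       (auto simp: eventually_at_left_field intro!: exI[of _ "quantile M p - 1"] less_imp_le below)
qed (use quantile_le_iff[OF p, of "quantile M p"] in simp)

lemma cdf_le_iff_le_quantile:
  assumes p: "0 < p" "p < 1"
  shows "cdf M t \<le> p \<longleftrightarrow> t \<le> quantile M p"
proof
  assume "cdf M t \<le> p"
  show "t \<le> quantile M p"
  proof (rule ccontr)
    assume "\<not> t \<le> quantile M p"
    then have "p < cdf M t"
      using cdf_strict_mono[of "quantile M p" t] cdf_nondecreasing[of "quantile M p" t] cdf_quantile[OF p] p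
      by simp
    with \<open>cdf M t \<le> p\<close> show False by simp
  qed
qed (use cdf_nondecreasing cdf_quantile[OF p] in metis)

end

lemma emeasure_density_lborel_affine:
  fixes f :: "real \<Rightarrow> real"
  assumes [measurable]: "f \<in> borel_measurable borel" "A \<in> sets borel" and c: "0 < c"
  shows "emeasure (density lborel (\<lambda>x. ennreal (f x))) A =
    emeasure (density lborel (\<lambda>u. ennreal (c * f (t + c * u)))) ((\<lambda>u. t + c * u) -` A)"
proof -
  have [measurable]: "(\<lambda>u. t + c * u) -` A \<in> sets borel"
    using measurable_sets[of "\<lambda>u. t + c * u" borel borel A] by simp
  have "emeasure (density lborel (\<lambda>x. ennreal (f x))) A = (\<integral>\<^sup>+x. ennreal (f x) * indicator A x \<partial>lborel)"
    by (simp add: emeasure_density)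
  also have "\<dots> = ennreal c * (\<integral>\<^sup>+u. ennreal (f (t + c * u)) * indicator A (t + c * u) \<partial>lborel)"
    using nn_integral_real_affine[of "\<lambda>x. ennreal (f x) * indicator A x" c t] c by simp
  also have "\<dots> = (\<integral>\<^sup>+u. ennreal (c * f (t + c * u)) * indicator ((\<lambda>u. t + c * u) -` A) u \<partial>lborel)"
    using c by (subst nn_integral_cmult[symmetric])
      (auto simp: ennreal_mult' mult.assoc indicator_def intro!: nn_integral_cong)
  also have "\<dots> = emeasure (density lborel (\<lambda>u. ennreal (c * f (t + c * u)))) ((\<lambda>u. t + c * u) -` A)"
    by (simp add: emeasure_density)
  finally show ?thesis .
qed

lemma measure_density_lborel_singleton:
  fixes f :: "real \<Rightarrow> ennreal"
  assumes [measurable]: "f \<in> borel_measurable borel"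
  shows "measure (density lborel f) {x} = 0"
proof -
  have "AE y\<in>{x} in lborel. f y = 0"
    using AE_lborel_singleton[of x] by eventually_elim auto
  then have "{x} \<in> null_sets (density lborel f)"
    by (subst null_sets_density_iff) auto
  then show ?thesis
    by (simp add: measure_def null_setsD1)
qed

lemma emeasure_density_lborel_interval_pos:
  fixes f :: "real \<Rightarrow> real"
  assumes [measurable]: "f \<in> borel_measurable borel" and "c < d"
    and pos: "\<And>u. c < u \<Longrightarrow> u < d \<Longrightarrow> 0 < f u"
  shows "0 < emeasure (density lborel (\<lambda>x. ennreal (f x))) {c<..<d}"
proof (rule ccontr)
  assume "\<not> ?thesis"
  then have "AE u in lborel. ennreal (f u) * indicator {c<..<d} u = 0"
    by (simp add: emeasure_density nn_integral_0_iff_AE)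
  then have "AE u in lborel. u \<notin> {c<..<d}"
    by eventually_elim (use pos in \<open>force simp: indicator_def ennreal_eq_0_iff\<close>)
  then have "emeasure lborel {c<..<d} = 0"
    by (subst (asm) AE_iff_measurable[of "{c<..<d}"]) auto
  with \<open>c < d\<close> show False
    by simp
qed

lemma continuous_real_distribution_density:
  fixes f :: "real \<Rightarrow> real"
  assumes [measurable]: "f \<in> borel_measurable borel"
    and prob: "prob_space (density lborel (\<lambda>x. ennreal (f x)))"
    and support_upward: "\<And>u w. 0 < f u \<Longrightarrow> u \<le> w \<Longrightarrow> 0 < f w"
  shows "continuous_real_distribution (density lborel (\<lambda>x. ennreal (f x)))"
    (is "continuous_real_distribution ?M")
proof -
  interpret real_distribution ?M
    using prob by (simp add: real_distribution_def real_distribution_axioms_def)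
  have "cdf ?M s < cdf ?M t" if "s < t" "0 < cdf ?M t" for s t
  proof -
    have "\<exists>u<t. 0 < f u"
    proof (rule ccontr)
      assume none: "\<not> (\<exists>u<t. 0 < f u)"
      have "AE x in lborel. ennreal (f x) * indicator {..t} x = 0"
        using AE_lborel_singleton[of t]
        by eventually_elim (use none in \<open>auto simp: indicator_def ennreal_eq_0_iff dest: le_neq_trans\<close>)
      then have "emeasure ?M {..t} = 0"
        by (subst emeasure_density) (auto simp: nn_integral_0_iff_AE simp del: mult_eq_0_iff)
      then have "cdf ?M t = 0"
        by (simp add: cdf_def measure_def)
      with \<open>0 < cdf ?M t\<close> show False
        by simp
    qed
    then obtain u where "u < t" "0 < f u"
      by blast
    then have "0 < emeasure ?M {max s u<..<t}"
      using \<open>s < t\<close> support_upward by (intro emeasure_density_lborel_interval_pos) auto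
    then have "0 < measure ?M {max s u<..<t}"
      by (simp add: emeasure_eq_measure)
    also have "\<dots> \<le> measure ?M {s<..t}"
      by (intro finite_measure_mono) auto
    also have "\<dots> = cdf ?M t - cdf ?M s"
      using \<open>s < t\<close> by (rule cdf_diff_eq[symmetric])
    finally show ?thesis
      by simp
  qed
  then show ?thesis
    by unfold_locales (simp_all add: measure_density_lborel_singleton)
qed

lemma gamma_density_measurable [measurable]: "gamma_density a b \<in> borel_measurable borel"
  unfolding gamma_density_def[abs_def] by measurable

lemma gamma_density_pos_iff:
  assumes "0 < a" "0 < b"
  shows "0 < gamma_density a b x \<longleftrightarrow> 0 < x"
  using assms by (simp add: gamma_density_def)

lemma gamma_density_rescale:
  assumes b: "0 < b"
  shows "gamma_density a b (u / b) / b = gamma_density a 1 u"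
proof (cases "0 < u")
  case True
  have "b powr a * (u / b) powr (a - 1) / b = u powr (a - 1)"
    using b True by (simp add: powr_divide powr_diff)
  then have "b powr a * (u / b) powr (a - 1) * exp (- u) / (Gamma a * b) =
      u powr (a - 1) * exp (- u) / Gamma a"
    by (metis divide_divide_eq_left mult.commute times_divide_eq_left)
  with True b show ?thesis
    by (simp add: gamma_density_def)
qed (use b in \<open>simp add: gamma_density_def zero_less_divide_iff\<close>)

text \<open>This lemma and the cdf rescalings below loop as simp rules (their unit instances
  reproduce themselves), so they are only used instantiated.\<close>

lemma emeasure_gamma_distr_rescale:
  assumes "0 < b" "A \<in> sets borel"
  shows "emeasure (gamma_distr a b) A = emeasure (gamma_distr a 1) {u. u / b \<in> A}"
proof -
  have "emeasure (gamma_distr a b) A =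
    emeasure (density lborel (\<lambda>u. ennreal (1 / b * gamma_density a b (0 + 1 / b * u))))
      ((\<lambda>u. 0 + 1 / b * u) -` A)"
    unfolding gamma_distr_def using assms by (intro emeasure_density_lborel_affine) auto
  then show ?thesis
    using assms by (simp add: gamma_density_rescale gamma_distr_def vimage_def)
qed

lemma prob_space_gamma_distr_unit_rate:
  assumes a: "0 < a"
  shows "prob_space (gamma_distr a 1)"
proof (rule prob_spaceI)
  define g where "g t = indicator {0..} t * t powr (a - 1) / exp t" for t :: real
  have Gamma_pos: "0 < Gamma a"
    using a by simp
  have density_eq:
    "AE t in lborel. ennreal (gamma_density a 1 t) = ennreal (g t) * ennreal (1 / Gamma a)"
    using AE_lborel_singleton[of 0]
  proof eventually_elim
    case (elim t)
    then have "gamma_density a 1 t = g t * (1 / Gamma a)"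
      by (cases "0 < t") (auto simp: gamma_density_def g_def exp_minus field_simps)
    then show ?case
      using Gamma_pos by (subst ennreal_mult''[symmetric]) auto
  qed
  have "emeasure (gamma_distr a 1) UNIV = (\<integral>\<^sup>+t. ennreal (gamma_density a 1 t) \<partial>lborel)"
    by (simp add: gamma_distr_def emeasure_density)
  also have "\<dots> = (\<integral>\<^sup>+t. ennreal (g t) * ennreal (1 / Gamma a) \<partial>lborel)"
    by (rule nn_integral_cong_AE[OF density_eq])
  also have "\<dots> = ennreal (Gamma a) * ennreal (1 / Gamma a)"
    using Gamma_conv_nn_integral_real[OF a] by (subst nn_integral_multc) (auto simp: g_def)
  also have "\<dots> = 1"
    using Gamma_pos by (subst ennreal_mult''[symmetric]) auto
  finally show "emeasure (gamma_distr a 1) (space (gamma_distr a 1)) = 1"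
    by (simp add: gamma_distr_def)
qed

lemma prob_space_gamma_distr:
  assumes "0 < a" "0 < b"
  shows "prob_space (gamma_distr a b)"
proof (rule prob_spaceI)
  have "emeasure (gamma_distr a b) UNIV = emeasure (gamma_distr a 1) UNIV"
    using emeasure_gamma_distr_rescale[of b UNIV a] assms by simp
  also have "\<dots> = 1"
    using prob_space.emeasure_space_1[OF prob_space_gamma_distr_unit_rate[OF \<open>0 < a\<close>]]
    by (simp add: gamma_distr_def)
  finally show "emeasure (gamma_distr a b) (space (gamma_distr a b)) = 1"
    by (simp add: gamma_distr_def)
qed

lemma continuous_real_distribution_gamma:
  assumes "0 < a" "0 < b"
  shows "continuous_real_distribution (gamma_distr a b)"
  using prob_space_gamma_distr[OF assms] gamma_density_pos_iff[OF assms] unfolding gamma_distr_def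
  by (intro continuous_real_distribution_density) auto

lemma cdf_gamma_distr_rescale:
  assumes "0 < b"
  shows "cdf (gamma_distr a b) x = cdf (gamma_distr a 1) (b * x)"
proof -
  have "{u. u / b \<in> {..x}} = {..b * x}"
    using assms by (auto simp: divide_le_eq mult.commute)
  then show ?thesis
    using emeasure_gamma_distr_rescale[OF assms, of "{..x}" a] by (simp add: cdf_def measure_def)
qed

lemma cdf_gamma_distr_swap:
  assumes "0 < b" "0 < x"
  shows "cdf (gamma_distr a b) x = cdf (gamma_distr a x) b"
  using cdf_gamma_distr_rescale[of b a x] cdf_gamma_distr_rescale[of x a b] assms
  by (simp add: mult.commute)

lemma cdf_gamma_distr_nonpos:
  assumes "x \<le> 0"
  shows "cdf (gamma_distr a b) x = 0"
proof -
  have "emeasure (gamma_distr a b) {..x} = 0"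
    unfolding gamma_distr_def using assms
    by (subst emeasure_density) (auto simp: nn_integral_0_iff_AE indicator_def gamma_density_def)
  then show ?thesis
    by (simp add: cdf_def measure_def)
qed

lemma q_gamma_pos:
  assumes "0 < a" "0 < b" "0 < p" "p < 1"
  shows "0 < q_gamma p a b"
proof (rule ccontr)
  interpret continuous_real_distribution "gamma_distr a b"
    using assms by (intro continuous_real_distribution_gamma)
  assume "\<not> 0 < q_gamma p a b"
  then have "cdf (gamma_distr a b) (q_gamma p a b) = 0"
    by (intro cdf_gamma_distr_nonpos) simp
  with cdf_quantile[of p] assms show False
    by (simp add: q_gamma_def)
qed

lemma normal_density_standardize:
  assumes s: "0 < s"
  shows "s * normal_density m s (m + s * u) = normal_density 0 1 u"
proof -
  have "sqrt (2 * pi * s\<^sup>2) = s * sqrt (2 * pi)" "(s * u)\<^sup>2 / (2 * s\<^sup>2) = u\<^sup>2 / 2"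
    using s by (simp_all add: real_sqrt_mult power_mult_distrib)
  then show ?thesis
    using s by (simp add: normal_density_def)
qed

lemma continuous_real_distribution_normal:
  assumes "0 < s"
  shows "continuous_real_distribution (normal_distr m s)"
  unfolding normal_distr_def using assms
  by (intro continuous_real_distribution_density prob_space_normal_density) (auto simp: normal_density_pos)

lemma cdf_normal_distr_standardize:
  assumes s: "0 < s"
  shows "cdf (normal_distr m s) x = cdf (normal_distr 0 1) ((x - m) / s)"
proof -
  have "(\<lambda>u. m + s * u) -` {..x} = {..(x - m) / s}"
    using s by (auto simp: le_divide_eq algebra_simps)
  then have "emeasure (normal_distr m s) {..x} = emeasure (normal_distr 0 1) {..(x - m) / s}"
    using emeasure_density_lborel_affine[of "normal_density m s" "{..x}" s m] s
    by (simp add: normal_distr_def normal_density_standardize)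
  then show ?thesis
    by (simp add: cdf_def measure_def)
qed

lemma cdf_edf_gamma:
  assumes "0 < V" "0 < phi" "0 < mu"
  shows "cdf_lt (edf_gamma mu V phi) y = cdf (gamma_distr (V / phi) (V / phi / mu)) y"
    and "cdf_le (edf_gamma mu V phi) y = cdf (gamma_distr (V / phi) (V / phi / mu)) y"
proof -
  interpret continuous_real_distribution "gamma_distr (V / phi) (V / phi / mu)"
    using assms by (intro continuous_real_distribution_gamma) auto
  show "cdf_lt (edf_gamma mu V phi) y = cdf (gamma_distr (V / phi) (V / phi / mu)) y"
    using cdf_lt_eq_cdf by (simp add: edf_gamma_def)
  show "cdf_le (edf_gamma mu V phi) y = cdf (gamma_distr (V / phi) (V / phi / mu)) y"
    by (simp add: edf_gamma_def cdf_le_eq_cdf)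
qed

lemma cdf_edf_normal:
  assumes "0 < V" "0 < phi"
  shows "cdf_lt (edf_normal mu V phi) y = cdf (normal_distr 0 1) ((y - mu) / sqrt (phi / V))"
    and "cdf_le (edf_normal mu V phi) y = cdf (normal_distr 0 1) ((y - mu) / sqrt (phi / V))"
proof -
  interpret continuous_real_distribution "normal_distr mu (sqrt (phi / V))"
    using assms by (intro continuous_real_distribution_normal) auto
  have "cdf (normal_distr mu (sqrt (phi / V))) y = cdf (normal_distr 0 1) ((y - mu) / sqrt (phi / V))"
    using assms by (intro cdf_normal_distr_standardize) auto
  then show "cdf_lt (edf_normal mu V phi) y = cdf (normal_distr 0 1) ((y - mu) / sqrt (phi / V))"
    and "cdf_le (edf_normal mu V phi) y = cdf (normal_distr 0 1) ((y - mu) / sqrt (phi / V))"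
    by (simp_all add: edf_normal_def cdf_lt_eq_cdf cdf_le_eq_cdf)
qed

lemma l_gamma_eq:
  assumes V: "0 < V" and phi: "0 < phi" and \<delta>: "0 < \<delta>" "\<delta> < 1"
  shows "l_gamma \<delta> y V phi =
    ereal ((V / phi) / q_gamma (1 - \<delta>) (V / phi) y * (if y > 0 then 1 else 0))"
proof -
  define a where "a = V / phi"
  have a: "0 < a"
    using V phi by (simp add: a_def)
  show ?thesis
  proof (cases "0 < y")
    case True
    interpret continuous_real_distribution "gamma_distr a y"
      using a True by (rule continuous_real_distribution_gamma)
    define q where "q = q_gamma (1 - \<delta>) a y"
    have q: "0 < q"
      using a True \<delta> by (simp add: q_def q_gamma_pos)
    have "cdf_lt (edf_gamma mu V phi) y \<le> 1 - \<delta> \<longleftrightarrow> a / q \<le> mu" if "0 < mu" for mu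
    proof -
      have "cdf_lt (edf_gamma mu V phi) y = cdf (gamma_distr a y) (a / mu)"
        using V phi that True a by (simp add: cdf_edf_gamma cdf_gamma_distr_swap a_def)
      also have "\<dots> \<le> 1 - \<delta> \<longleftrightarrow> a / mu \<le> q"
        using \<delta> by (simp add: cdf_le_iff_le_quantile q_def q_gamma_def)
      also have "\<dots> \<longleftrightarrow> a / q \<le> mu"
        using that q by (simp add: divide_le_eq le_divide_eq mult.commute)
      finally show ?thesis .
    qed
    then have "{mu \<in> {0<..}. cdf_lt (edf_gamma mu V phi) y \<le> 1 - \<delta>} = {a / q..}"
      using a q by (auto intro: less_le_trans[OF divide_pos_pos[OF a q]])
    then show ?thesis
      using True by (simp add: l_gamma_def l_bound_def a_def[symmetric] q_def ereal_Inf'[symmetric])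
  next
    case False
    have "cdf_lt (edf_gamma mu V phi) y = 0" if "0 < mu" for mu
      using V phi that False by (simp add: cdf_edf_gamma cdf_gamma_distr_nonpos)
    then have "{mu \<in> {0<..}. cdf_lt (edf_gamma mu V phi) y \<le> 1 - \<delta>} = {0<..}"
      using \<delta> by auto
    then show ?thesis
      using False by (simp add: l_gamma_def l_bound_def ereal_Inf'[symmetric])
  qed
qed

lemma u_gamma_eq:
  assumes V: "0 < V" and phi: "0 < phi" and \<delta>: "0 < \<delta>" "\<delta> < 1"
  shows "u_gamma \<delta> y V phi =
    ereal ((V / phi) / q_gamma \<delta> (V / phi) y * (if y > 0 then 1 else 0))"
proof -
  define a where "a = V / phi"
  have a: "0 < a"
    using V phi by (simp add: a_def)
  show ?thesis
  proof (cases "0 < y")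
    case True
    interpret continuous_real_distribution "gamma_distr a y"
      using a True by (rule continuous_real_distribution_gamma)
    define q where "q = q_gamma \<delta> a y"
    have q: "0 < q"
      using a True \<delta> by (simp add: q_def q_gamma_pos)
    have "\<delta> \<le> cdf_le (edf_gamma mu V phi) y \<longleftrightarrow> mu \<le> a / q" if "0 < mu" for mu
    proof -
      have "cdf_le (edf_gamma mu V phi) y = cdf (gamma_distr a y) (a / mu)"
        using V phi that True a by (simp add: cdf_edf_gamma cdf_gamma_distr_swap a_def)
      moreover have "\<delta> \<le> cdf (gamma_distr a y) (a / mu) \<longleftrightarrow> q \<le> a / mu"
        using \<delta> by (simp add: quantile_le_iff q_def q_gamma_def)
      moreover have "q \<le> a / mu \<longleftrightarrow> mu \<le> a / q"
        using that q by (simp add: divide_le_eq le_divide_eq mult.commute)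
      ultimately show ?thesis
        by simp
    qed
    then have "{mu \<in> {0<..}. \<delta> \<le> cdf_le (edf_gamma mu V phi) y} = {0<..a / q}"
      by auto
    moreover have "Sup (ereal ` {0<..a / q}) = ereal (a / q)"
      using a q by (intro antisym) (auto intro: Sup_upper Sup_least)
    ultimately show ?thesis
      using True a q by (simp add: u_gamma_def u_bound_def a_def[symmetric] q_def)
  next
    case False
    have "cdf_le (edf_gamma mu V phi) y = 0" if "0 < mu" for mu
      using V phi that False by (simp add: cdf_edf_gamma cdf_gamma_distr_nonpos)
    then have "{mu \<in> {0<..}. \<delta> \<le> cdf_le (edf_gamma mu V phi) y} = {}"
      using \<delta> by auto
    then show ?thesis
      using False by (simp add: u_gamma_def u_bound_def ereal_Inf'[symmetric])
  qed
qed

lemma l_normal_eq: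
  assumes V: "0 < V" and phi: "0 < phi" and \<delta>: "0 < \<delta>" "\<delta> < 1"
  shows "l_normal \<delta> y V phi = ereal (y - Phi_inv (1 - \<delta>) / sqrt (V / phi))"
proof -
  interpret continuous_real_distribution "normal_distr 0 1"
    by (rule continuous_real_distribution_normal) simp
  define s where "s = sqrt (phi / V)"
  have s: "0 < s"
    using V phi by (simp add: s_def)
  have "cdf_lt (edf_normal mu V phi) y \<le> 1 - \<delta> \<longleftrightarrow> y - s * Phi_inv (1 - \<delta>) \<le> mu" for mu
  proof -
    have "cdf_lt (edf_normal mu V phi) y \<le> 1 - \<delta> \<longleftrightarrow> (y - mu) / s \<le> Phi_inv (1 - \<delta>)"
      using V phi \<delta> by (simp add: cdf_edf_normal cdf_le_iff_le_quantile Phi_inv_def s_def)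
    also have "\<dots> \<longleftrightarrow> y - s * Phi_inv (1 - \<delta>) \<le> mu"
      using s by (simp add: divide_le_eq algebra_simps)
    finally show ?thesis .
  qed
  then have "{mu \<in> UNIV. cdf_lt (edf_normal mu V phi) y \<le> 1 - \<delta>} = {y - s * Phi_inv (1 - \<delta>)..}"
    by auto
  moreover have "s * Phi_inv (1 - \<delta>) = Phi_inv (1 - \<delta>) / sqrt (V / phi)"
    using V phi by (simp add: s_def real_sqrt_divide field_simps)
  ultimately show ?thesis
    by (simp add: l_normal_def l_bound_def ereal_Inf'[symmetric])
qed

lemma u_normal_eq:
  assumes V: "0 < V" and phi: "0 < phi" and \<delta>: "0 < \<delta>" "\<delta> < 1"
  shows "u_normal \<delta> y V phi = ereal (y - Phi_inv \<delta> / sqrt (V / phi))"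
proof -
  interpret continuous_real_distribution "normal_distr 0 1"
    by (rule continuous_real_distribution_normal) simp
  define s where "s = sqrt (phi / V)"
  have s: "0 < s"
    using V phi by (simp add: s_def)
  have "\<delta> \<le> cdf_le (edf_normal mu V phi) y \<longleftrightarrow> mu \<le> y - s * Phi_inv \<delta>" for mu
  proof -
    have "\<delta> \<le> cdf_le (edf_normal mu V phi) y \<longleftrightarrow> Phi_inv \<delta> \<le> (y - mu) / s"
      using V phi \<delta> by (simp add: cdf_edf_normal quantile_le_iff Phi_inv_def s_def)
    also have "\<dots> \<longleftrightarrow> mu \<le> y - s * Phi_inv \<delta>"
      using s by (simp add: le_divide_eq algebra_simps)
    finally show ?thesis .
  qed
  then have "{mu \<in> UNIV. \<delta> \<le> cdf_le (edf_normal mu V phi) y} = {..y - s * Phi_inv \<delta>}"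
    by auto
  moreover have "Sup (ereal ` {..y - s * Phi_inv \<delta>}) = ereal (y - s * Phi_inv \<delta>)"
    by (intro antisym) (auto intro: Sup_upper Sup_least)
  moreover have "s * Phi_inv \<delta> = Phi_inv \<delta> / sqrt (V / phi)"
    using V phi by (simp add: s_def real_sqrt_divide field_simps)
  ultimately show ?thesis
    by (simp add: u_normal_def u_bound_def)
qed

lemma vsum_pos:
  assumes "j \<le> k" "\<And>i. i \<in> {j..k} \<Longrightarrow> 0 < v i"
  shows "0 < vsum v j k"
  unfolding vsum_def using assms by (intro sum_pos) auto

theorem proposition5p2:
  fixes n :: nat and phi \<alpha> \<delta> :: real and v y :: "nat \<Rightarrow> real"
    and J :: "(nat \<times> nat) set"
  assumes phi_pos: "phi > 0"
    and v_pos: "\<forall>i\<in>{1..n}. v i > 0"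
    and J_sub: "J \<subseteq> {1..n} \<times> {1..n}"
    and J_ord: "\<forall>(j,k)\<in>J. j \<le> k"
    and alpha: "0 < 1 - \<alpha>" "1 - \<alpha> < 1"
    and delta: "\<delta> = \<alpha> / (2 * real (card J))"
  shows
    "(\<forall>mu :: nat \<Rightarrow> real.
        (\<forall>i\<in>{1..n}. mu i > 0) \<and> mono_on {1..n} mu \<longrightarrow>
        (\<forall>i\<in>{1..n}.
           L_bound l_gamma \<delta> J phi v y mu i =
             (SUP (j,k)\<in>{(j,k)\<in>J. mu i \<ge> mu k}.
                ereal ((vsum v j k / phi) / q_gamma (1 - \<delta>) (vsum v j k / phi) (Zavg v y j k)
                       * (if Zavg v y j k > 0 then 1 else 0))) \<and>
           U_bound u_gamma \<delta> J phi v y mu i =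
             (INF (j,k)\<in>{(j,k)\<in>J. mu i \<le> mu j}.
                ereal ((vsum v j k / phi) / q_gamma \<delta> (vsum v j k / phi) (Zavg v y j k)
                       * (if Zavg v y j k > 0 then 1 else 0)))))
     \<and>
     (\<forall>mu :: nat \<Rightarrow> real.
        mono_on {1..n} mu \<longrightarrow>
        (\<forall>i\<in>{1..n}.
           L_bound l_normal \<delta> J phi v y mu i =
             (SUP (j,k)\<in>{(j,k)\<in>J. mu i \<ge> mu k}.
                ereal (Zavg v y j k - Phi_inv (1 - \<delta>) / sqrt (vsum v j k / phi))) \<and>
           U_bound u_normal \<delta> J phi v y mu i =
             (INF (j,k)\<in>{(j,k)\<in>J. mu i \<le> mu j}.
                ereal (Zavg v y j k - Phi_inv \<delta> / sqrt (vsum v j k / phi)))))"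
proof -
  have "finite J"
    using J_sub by (rule finite_subset) auto
  have pair_params: "0 < vsum v j k \<and> 0 < \<delta> \<and> \<delta> < 1" if "(j, k) \<in> J" for j k
  proof -
    have "1 \<le> real (card J)"
      using that \<open>finite J\<close> by (auto simp: Suc_le_eq card_gt_0_iff)
    then have "0 < \<delta> \<and> \<delta> < 1"
      using alpha unfolding delta by (auto simp: field_simps)
    moreover have "0 < vsum v j k"
      using that J_ord J_sub v_pos by (intro vsum_pos) auto
    ultimately show ?thesis
      by simp
  qed
  show ?thesis
    unfolding L_bound_def U_bound_def
    by (auto intro!: SUP_cong INF_cong
        simp: pair_params phi_pos l_gamma_eq u_gamma_eq l_normal_eq u_normal_eq)
qed

end
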